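(* Let $E_1\subset\mathbb{R}^n$ be a closed Euclidean ball with center $c$ and radius $R>0$, and let $\mathcal{Y}_*\subset E_1$ be a convex set containing a Euclidean ball $\{y:\|y-y_*\|_2\leq\rho_*\}$ of radius $\rho_*>0$. Consider an oracle which, when queried at a point $y\in\mathbb{R}^n$, either returns nothing ("gets stuck") or returns an affine function $f:\mathbb{R}^n\to\mathbb{R}$ with $\|\nabla f\|_2=1$, $f(y)\geq 0$ and $f(z)\leq 0$ for all $z\in\mathcal{Y}_*$ (a "separator"). The Bundle-Level (BL) algorithm queries the oracle at points $y^1,y^2,\dots$ defined as follows: $y^1=c$; if at steps $1,\dots,s-1$ the oracle returned separators $f_1,\dots,f_{s-1}$, set $f^{s-1}(y)=\max_{r<s}f_r(y)$, $\Delta_{s-1}=\min_{y\in E_1}f^{s-1}(y)$, and $$y^s=\mathrm{argmin}_y\Big\{\|y^{s-1}-y\|_2:\ y\in E_1,\ f^{s-1}(y)\leq \tfrac12\Delta_{s-1}\Big\};$$ the algorithm terminates at the first step at which the oracle returns nothing. Then for every $s\geq 1$ such that the oracle returned separators at steps $1,\dots,s$, one has $\Delta_s\leq-\rho_*$ (in particular all points $y^s$ are well defined). Moreover, if the oracle returned separators at each of the steps $1,\dots,S$, then $S\leq 32R^2/\rho_*^2$; hence BL terminates after at most $32R^2/\rho_*^2+1$ steps. *)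

theory Defs
  imports "HOL-Analysis.Analysis"
begin

definition BL_model :: "(nat \<Rightarrow> 'a \<Rightarrow> real) \<Rightarrow> nat \<Rightarrow> 'a \<Rightarrow> real" where
  "BL_model f s y = Max ((\<lambda>r. f r y) ` {1..s})"

definition BL_gap :: "(nat \<Rightarrow> 'a::metric_space \<Rightarrow> real) \<Rightarrow> nat \<Rightarrow> 'a \<Rightarrow> real \<Rightarrow> real" where
  "BL_gap f s c R = (INF y\<in>cball c R. BL_model f s y)"

definition BL_level_set :: "(nat \<Rightarrow> 'a::metric_space \<Rightarrow> real) \<Rightarrow> nat \<Rightarrow> 'a \<Rightarrow> real \<Rightarrow> 'a set" where
  "BL_level_set f s c R = {y \<in> cball c R. BL_model f s y \<le> BL_gap f s c R / 2}"

end

theory Submission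
  imports Defs
begin

text \<open>Every separator is nonpositive on the ball of radius \<rho> around y_star and has a unit
  gradient, so it is at most -\<rho> at y_star; hence gap s \<le> -\<rho>. The separator f s is
  nonnegative at y s and at most gap s / 2 at y (s + 1), so each step has length at least
  -gap s / 2. Split the run up to step t into phases in which -gap stays within a factor 2
  of -gap t. During the last phase a minimiser of the model at step t lies in every level set,
  and since y (s + 1) is the projection of y s onto a convex set containing it, the squared
  distance to the minimiser drops by (gap t)^2 / 4 per step; starting from at most 4 R^2, the
  phase has at most 16 R^2 / (gap t)^2 steps. Induction over the earlier phases, where -gap is
  more than twice as large, gives t (gap t)^2 \<le> 24 R^2, and with gap t \<le> -\<rho> this bounds S.\<close>

definition unit_affine :: "('a::real_inner \<Rightarrow> real) \<Rightarrow> bool" where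
  "unit_affine h \<longleftrightarrow> (\<exists>g b. norm g = 1 \<and> (\<forall>z. h z = inner g z + b))"

lemma unit_affine_convex_on:
  assumes "unit_affine h"
  shows "convex_on UNIV h"
proof -
  obtain g b where h: "\<And>z. h z = inner g z + b"
    using assms unfolding unit_affine_def by blast
  show ?thesis
  proof (rule convex_onI)
    fix t :: real and x z
    have "h ((1 - t) *\<^sub>R x + t *\<^sub>R z) = (1 - t) * h x + t * h z"
      unfolding h by (simp add: inner_add_right algebra_simps)
    then show "h ((1 - t) *\<^sub>R x + t *\<^sub>R z) \<le> (1 - t) * h x + t * h z" by simp
  qed simp
qed

lemma unit_affine_diff_le_dist:
  assumes "unit_affine h"
  shows "h x - h z \<le> dist x z"
proof -
  obtain g b where g: "norm g = 1" and h: "\<And>z. h z = inner g z + b"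
    using assms unfolding unit_affine_def by blast
  have "h x - h z = inner g (x - z)"
    unfolding h by (simp add: inner_diff_right)
  also have "\<dots> \<le> norm g * norm (x - z)"
    by (rule norm_cauchy_schwarz)
  finally show ?thesis
    by (simp add: g dist_norm)
qed

lemma unit_affine_le_neg_radius:
  assumes "unit_affine h" and "0 \<le> r" and nonpos: "\<And>z. z \<in> cball x r \<Longrightarrow> h z \<le> 0"
  shows "h x \<le> - r"
proof -
  obtain g b where g: "norm g = 1" and h: "\<And>z. h z = inner g z + b"
    using assms(1) unfolding unit_affine_def by blast
  have "x + r *\<^sub>R g \<in> cball x r"
    using g \<open>0 \<le> r\<close> by (simp add: dist_norm)
  moreover have "h (x + r *\<^sub>R g) = h x + r"
    unfolding h using g by (simp add: inner_add_right power2_norm_eq_inner[symmetric])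
  ultimately show ?thesis
    using nonpos by fastforce
qed

lemma BL_model_ge:
  assumes "r \<in> {1..s}"
  shows "f r y \<le> BL_model f s y"
  unfolding BL_model_def using assms by (intro Max_ge) auto

lemma BL_model_le_iff:
  assumes "1 \<le> s"
  shows "BL_model f s y \<le> a \<longleftrightarrow> (\<forall>r\<in>{1..s}. f r y \<le> a)"
  unfolding BL_model_def using assms by (subst Max_le_iff) auto

lemma BL_model_mono:
  assumes "1 \<le> s" "s \<le> t"
  shows "BL_model f s y \<le> BL_model f t y"
  using assms by (auto simp: BL_model_le_iff intro: BL_model_ge)

lemma convex_on_BL_model:
  assumes "1 \<le> s" and convex: "\<And>r. r \<in> {1..s} \<Longrightarrow> convex_on A (f r)"
  shows "convex_on A (BL_model f s)"
proof (rule convex_onI)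
  fix t :: real and x z
  assume t: "0 < t" "t < 1" and xz: "x \<in> A" "z \<in> A"
  show "BL_model f s ((1 - t) *\<^sub>R x + t *\<^sub>R z) \<le> (1 - t) * BL_model f s x + t * BL_model f s z"
    unfolding BL_model_le_iff[OF \<open>1 \<le> s\<close>]
  proof
    fix r assume r: "r \<in> {1..s}"
    have "f r ((1 - t) *\<^sub>R x + t *\<^sub>R z) \<le> (1 - t) * f r x + t * f r z"
      using convex_onD[OF convex[OF r]] t xz by simp
    also have "\<dots> \<le> (1 - t) * BL_model f s x + t * BL_model f s z"
      using BL_model_ge[OF r] t by (intro add_mono mult_left_mono) auto
    finally show "f r ((1 - t) *\<^sub>R x + t *\<^sub>R z) \<le> \<dots>" .
  qed
next
  show "convex A"
    using convex[of 1] \<open>1 \<le> s\<close> by (auto dest: convex_on_imp_convex)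
qed

lemma BL_gap_le_BL_model:
  fixes c :: "'a::heine_borel"
  assumes "continuous_on (cball c R) (BL_model f s)" and "z \<in> cball c R"
  shows "BL_gap f s c R \<le> BL_model f s z"
proof -
  have "bounded (BL_model f s ` cball c R)"
    using compact_continuous_image[OF assms(1) compact_cball] by (rule compact_imp_bounded)
  then show ?thesis
    unfolding BL_gap_def using assms(2) by (intro cINF_lower bounded_imp_bdd_below)
qed

lemma BL_gap_attained:
  fixes c :: "'a::{heine_borel,real_normed_vector}"
  assumes "continuous_on (cball c R) (BL_model f s)" and "0 \<le> R"
  obtains u where "u \<in> cball c R" "BL_model f s u = BL_gap f s c R"
proof -
  obtain u where u: "u \<in> cball c R" "\<forall>z\<in>cball c R. BL_model f s u \<le> BL_model f s z"
    using continuous_attains_inf[OF compact_cball _ assms(1)] \<open>0 \<le> R\<close> by auto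
  have "BL_model f s u \<le> BL_gap f s c R"
    unfolding BL_gap_def using u(2) \<open>0 \<le> R\<close> by (intro cINF_greatest) auto
  with BL_gap_le_BL_model[OF assms(1) u(1)] u(1) that show ?thesis
    by simp
qed

lemma BL_gap_mono:
  fixes c :: "'a::{heine_borel,real_normed_vector}"
  assumes "continuous_on (cball c R) (BL_model f s)" and "0 \<le> R" and "1 \<le> s" "s \<le> t"
  shows "BL_gap f s c R \<le> BL_gap f t c R"
  unfolding BL_gap_def[of f t]
proof (rule cINF_greatest)
  show "cball c R \<noteq> {}" using \<open>0 \<le> R\<close> by simp
next
  fix z assume "z \<in> cball c R"
  then show "BL_gap f s c R \<le> BL_model f t z"
    using BL_gap_le_BL_model[OF assms(1), of z] BL_model_mono[OF assms(3,4), of f z] by linarith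
qed

lemma convex_BL_level_set:
  fixes c :: "'a::real_normed_vector"
  assumes "convex_on (cball c R) (BL_model f s)"
  shows "convex (BL_level_set f s c R)"
proof (rule convexI)
  fix x z and u v :: real
  assume xz: "x \<in> BL_level_set f s c R" "z \<in> BL_level_set f s c R"
    and uv: "0 \<le> u" "0 \<le> v" "u + v = 1"
  have xz_ball: "x \<in> cball c R" "z \<in> cball c R"
    using xz unfolding BL_level_set_def by auto
  have "BL_model f s (u *\<^sub>R x + v *\<^sub>R z) \<le> max (BL_model f s x) (BL_model f s z)"
    using convex_lower[OF assms xz_ball uv] .
  moreover have "u *\<^sub>R x + v *\<^sub>R z \<in> cball c R"
    using convexD[OF convex_cball xz_ball uv] .
  ultimately show "u *\<^sub>R x + v *\<^sub>R z \<in> BL_level_set f s c R"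
    using xz unfolding BL_level_set_def by auto
qed

lemma closed_BL_level_set:
  assumes "continuous_on UNIV (BL_model f s)"
  shows "closed (BL_level_set f s c R)"
proof -
  have level_set: "BL_level_set f s c R = cball c R \<inter> {y. BL_model f s y \<le> BL_gap f s c R / 2}"
    unfolding BL_level_set_def by blast
  show ?thesis
    unfolding level_set by (intro closed_Int closed_cball closed_Collect_le assms continuous_on_const)
qed

lemma closest_point_pythagoras:
  fixes x p z :: "'a::euclidean_space"
  assumes "convex L" "closed L" "p \<in> L" "z \<in> L" "\<forall>w\<in>L. dist x p \<le> dist x w"
  shows "(dist p z)\<^sup>2 + (dist x p)\<^sup>2 \<le> (dist x z)\<^sup>2"
proof -
  have "inner (x - p) (z - p) \<le> 0"
    using any_closest_point_dot[OF assms] .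
  moreover have "(dist x z)\<^sup>2 = (dist x p)\<^sup>2 + (dist p z)\<^sup>2 - 2 * inner (x - p) (z - p)"
    unfolding dist_norm power2_norm_eq_inner
    by (simp add: inner_diff_left inner_diff_right inner_commute algebra_simps)
  ultimately show ?thesis by linarith
qed

lemma linear_decrease_bound:
  fixes q :: "nat \<Rightarrow> real"
  assumes "a \<le> b" and decrease: "\<And>s. a \<le> s \<Longrightarrow> s < b \<Longrightarrow> q (Suc s) \<le> q s - \<delta>"
  shows "q b \<le> q a - real (b - a) * \<delta>"
  using \<open>a \<le> b\<close>
proof (induction b rule: dec_induct)
  case (step n)
  then show ?case
    using decrease[of n] by (simp add: Suc_diff_le algebra_simps)
qed simp

lemma halving_phases_bound:
  fixes d :: "nat \<Rightarrow> real"
  assumes pos: "\<And>t. 1 \<le> t \<Longrightarrow> t \<le> T \<Longrightarrow> 0 < d t"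
    and phase: "\<And>a t. 1 \<le> a \<Longrightarrow> a \<le> t \<Longrightarrow> t \<le> T \<Longrightarrow> \<forall>s\<in>{a..t}. d s \<le> 2 * d t \<Longrightarrow>
                  real (Suc t - a) * (d t)\<^sup>2 \<le> K"
  shows "1 \<le> t \<Longrightarrow> t \<le> T \<Longrightarrow> real t * (d t)\<^sup>2 \<le> 3 / 2 * K"
proof (induction t rule: less_induct)
  \<comment> \<open>Split at the last m \<le> t with d m > 2 d t: induction gives m (d t)^2 \<le> 3/8 K and the
    phase after m gives (t - m) (d t)^2 \<le> K.\<close>
  case (less t)
  have dt: "0 < d t" using pos less.prems .
  have "(d t)\<^sup>2 \<le> K"
    using phase[of t t] dt less.prems by simp
  then have K: "0 \<le> K"
    using zero_le_power2 order_trans by blast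
  define A where "A = {s\<in>{1..t}. 2 * d t < d s}"
  show ?case
  proof (cases "A = {}")
    case True
    then have "real (Suc t - 1) * (d t)\<^sup>2 \<le> K"
      using less.prems by (intro phase) (auto simp: A_def not_less)
    with K show ?thesis by simp
  next
    case False
    define m where "m = Max A"
    have "finite A" unfolding A_def by simp
    then have "m \<in> A" and m_greatest: "\<And>s. s \<in> A \<Longrightarrow> s \<le> m"
      using False unfolding m_def by auto
    then have m: "1 \<le> m" "m \<le> t" "2 * d t < d m"
      unfolding A_def by auto
    with dt have "m < t" by (cases "m = t") auto
    have "4 * (d t)\<^sup>2 \<le> (d m)\<^sup>2"
      using m(3) dt power_mono[of "2 * d t" "d m" 2] by (simp add: power_mult_distrib)
    then have "real m * (4 * (d t)\<^sup>2) \<le> real m * (d m)\<^sup>2"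
      by (rule mult_left_mono) simp
    moreover have "real m * (d m)\<^sup>2 \<le> 3 / 2 * K"
      using less.IH[OF \<open>m < t\<close>] m less.prems by simp
    ultimately have early: "real m * (d t)\<^sup>2 \<le> 3 / 8 * K"
      by simp
    have "\<forall>s\<in>{Suc m..t}. d s \<le> 2 * d t"
    proof
      fix s assume "s \<in> {Suc m..t}"
      with m_greatest[of s] m(1) show "d s \<le> 2 * d t"
        unfolding A_def by (force simp: not_less)
    qed
    then have late: "real (t - m) * (d t)\<^sup>2 \<le> K"
      using phase[of "Suc m" t] \<open>m < t\<close> less.prems by simp
    have "real t * (d t)\<^sup>2 = real m * (d t)\<^sup>2 + real (t - m) * (d t)\<^sup>2"
      using \<open>m < t\<close> by (simp add: of_nat_diff algebra_simps)
    with early late K show ?thesis by linarith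
  qed
qed

locale bundle_level_run =
  fixes c y_star :: "'a::euclidean_space" and R \<rho> :: real
    and f :: "nat \<Rightarrow> 'a \<Rightarrow> real" and y :: "nat \<Rightarrow> 'a" and S :: nat
  assumes radius_pos: "0 < \<rho>"
    and target_ball_subset: "cball y_star \<rho> \<subseteq> cball c R"
    and unit_affine: "s \<in> {1..S} \<Longrightarrow> unit_affine (f s)"
    and separator_at_query: "s \<in> {1..S} \<Longrightarrow> 0 \<le> f s (y s)"
    and separator_on_target: "s \<in> {1..S} \<Longrightarrow> z \<in> cball y_star \<rho> \<Longrightarrow> f s z \<le> 0"
    and first_query: "y 1 = c"
    and next_query: "s \<in> {1..<S} \<Longrightarrow> y (Suc s) \<in> BL_level_set f s c R"
    and next_query_closest:
      "s \<in> {1..<S} \<Longrightarrow> z \<in> BL_level_set f s c R \<Longrightarrow> dist (y s) (y (Suc s)) \<le> dist (y s) z"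
begin

abbreviation gap :: "nat \<Rightarrow> real" where
  "gap s \<equiv> BL_gap f s c R"

lemma target_radius_le: "dist y_star c + \<rho> \<le> R"
  using target_ball_subset radius_pos by (simp add: cball_subset_cball_iff)

lemma radius_le: "\<rho> \<le> R"
  using target_radius_le zero_le_dist[of y_star c] by linarith

lemma radius_nonneg: "0 \<le> R"
  using radius_le radius_pos by linarith

lemma convex_on_model: "s \<in> {1..S} \<Longrightarrow> convex_on UNIV (BL_model f s)"
  by (intro convex_on_BL_model unit_affine_convex_on unit_affine) auto

lemma continuous_on_model: "s \<in> {1..S} \<Longrightarrow> continuous_on A (BL_model f s)"
  using convex_on_continuous[OF open_UNIV convex_on_model] continuous_on_subset by blast

lemma gap_le_model: "s \<in> {1..S} \<Longrightarrow> z \<in> cball c R \<Longrightarrow> gap s \<le> BL_model f s z"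
  by (rule BL_gap_le_BL_model[OF continuous_on_model])

lemma gap_mono: "s \<in> {1..S} \<Longrightarrow> s \<le> t \<Longrightarrow> gap s \<le> gap t"
  by (intro BL_gap_mono continuous_on_model radius_nonneg) auto

lemma separator_le_neg_radius: "s \<in> {1..S} \<Longrightarrow> f s y_star \<le> - \<rho>"
  using radius_pos by (intro unit_affine_le_neg_radius unit_affine separator_on_target) auto

lemma gap_le_neg_radius:
  assumes "s \<in> {1..S}"
  shows "gap s \<le> - \<rho>"
proof -
  have "y_star \<in> cball c R"
    using target_ball_subset radius_pos by (meson centre_in_cball less_imp_le subsetD)
  then have "gap s \<le> BL_model f s y_star"
    using gap_le_model[OF assms] by blast
  also have "\<dots> \<le> - \<rho>"
    using assms separator_le_neg_radius by (auto simp: BL_model_le_iff)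
  finally show ?thesis .
qed

lemma query_in_cball:
  assumes "s \<in> {1..S}"
  shows "y s \<in> cball c R"
proof (cases "s = 1")
  case False
  then have "y (Suc (s - 1)) \<in> BL_level_set f (s - 1) c R"
    using assms by (intro next_query) auto
  with False assms show ?thesis
    by (simp add: BL_level_set_def)
qed (use first_query radius_nonneg in simp)

lemma query_step_length:
  assumes "s \<in> {1..<S}"
  shows "- gap s / 2 \<le> dist (y s) (y (Suc s))"
proof -
  have "f s (y (Suc s)) \<le> BL_model f s (y (Suc s))"
    using assms by (intro BL_model_ge) auto
  also have "\<dots> \<le> gap s / 2"
    using next_query[OF assms] unfolding BL_level_set_def by simp
  finally have "f s (y (Suc s)) \<le> gap s / 2" .
  moreover have "f s (y s) - f s (y (Suc s)) \<le> dist (y s) (y (Suc s))"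
    using assms by (intro unit_affine_diff_le_dist unit_affine) auto
  moreover have "0 \<le> f s (y s)"
    using assms by (intro separator_at_query) auto
  ultimately show ?thesis by linarith
qed

lemma query_dist_decrease:
  assumes "s \<in> {1..<S}" and "z \<in> BL_level_set f s c R"
  shows "(dist (y (Suc s)) z)\<^sup>2 + (dist (y s) (y (Suc s)))\<^sup>2 \<le> (dist (y s) z)\<^sup>2"
proof (rule closest_point_pythagoras)
  have "s \<in> {1..S}" using assms(1) by auto
  then show "convex (BL_level_set f s c R)"
    by (intro convex_BL_level_set convex_on_subset[OF convex_on_model]) auto
  show "closed (BL_level_set f s c R)"
    using \<open>s \<in> {1..S}\<close> by (intro closed_BL_level_set continuous_on_model)
qed (use assms next_query next_query_closest in auto)

lemma phase_length_bound:
  assumes "1 \<le> a" "a \<le> t" "t < S" and within_factor_2: "\<forall>s\<in>{a..t}. - gap s \<le> 2 * - gap t"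
  shows "real (Suc t - a) * (gap t)\<^sup>2 \<le> 16 * R\<^sup>2"
proof -
  have t: "t \<in> {1..S}" using assms by auto
  obtain u where u: "u \<in> cball c R" "BL_model f t u = gap t"
    using BL_gap_attained[OF continuous_on_model[OF t] radius_nonneg] .
  have decrease: "(dist (y (Suc s)) u)\<^sup>2 \<le> (dist (y s) u)\<^sup>2 - (gap t)\<^sup>2 / 4"
    if s: "a \<le> s" "s < Suc t" for s
  proof -
    have "BL_model f s u \<le> BL_model f t u"
      using s assms by (intro BL_model_mono) auto
    also have "\<dots> \<le> gap s / 2"
      using u(2) within_factor_2 s by force
    finally have "u \<in> BL_level_set f s c R"
      using u(1) unfolding BL_level_set_def by simp
    then have "(dist (y (Suc s)) u)\<^sup>2 + (dist (y s) (y (Suc s)))\<^sup>2 \<le> (dist (y s) u)\<^sup>2"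
      using s assms by (intro query_dist_decrease) auto
    moreover have "- gap t / 2 \<le> dist (y s) (y (Suc s))"
      using gap_mono[of s t] query_step_length[of s] s assms by fastforce
    then have "(- gap t / 2)\<^sup>2 \<le> (dist (y s) (y (Suc s)))\<^sup>2"
      using gap_le_neg_radius[OF t] radius_pos by (intro power_mono) auto
    ultimately show ?thesis
      by (simp add: power2_eq_square)
  qed
  have "(dist (y (Suc t)) u)\<^sup>2 \<le> (dist (y a) u)\<^sup>2 - real (Suc t - a) * ((gap t)\<^sup>2 / 4)"
    using assms decrease by (intro linear_decrease_bound) auto
  moreover have "dist (y a) u \<le> 2 * R"
    using query_in_cball[of a] u(1) assms dist_triangle[of "y a" u c]
    by (auto simp: dist_commute)
  then have "(dist (y a) u)\<^sup>2 \<le> 4 * R\<^sup>2"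
    using power_mono[of "dist (y a) u" "2 * R" 2] by (simp add: power_mult_distrib)
  ultimately have "real (Suc t - a) * ((gap t)\<^sup>2 / 4) \<le> 4 * R\<^sup>2"
    using zero_le_power2[of "dist (y (Suc t)) u"] by linarith
  then show ?thesis
    by simp
qed

lemma weighted_gap_bound:
  assumes "1 \<le> t" "t < S"
  shows "real t * (gap t)\<^sup>2 \<le> 24 * R\<^sup>2"
proof -
  have "real t * (- gap t)\<^sup>2 \<le> 3 / 2 * (16 * R\<^sup>2)"
  proof (rule halving_phases_bound[of "S - 1"])
    show "0 < - gap t" if "1 \<le> t" "t \<le> S - 1" for t
    proof -
      have "gap t \<le> - \<rho>"
        using that by (intro gap_le_neg_radius) auto
      with radius_pos show ?thesis by linarith
    qed
    show "real (Suc t - a) * (- gap t)\<^sup>2 \<le> 16 * R\<^sup>2"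
      if "1 \<le> a" "a \<le> t" "t \<le> S - 1" "\<forall>s\<in>{a..t}. - gap s \<le> 2 * - gap t" for a t
      using phase_length_bound[of a t] that by simp
  qed (use assms in auto)
  then show ?thesis by simp
qed

lemma iteration_bound: "real S * \<rho>\<^sup>2 \<le> 32 * R\<^sup>2"
proof -
  have "\<rho>\<^sup>2 \<le> R\<^sup>2"
    using radius_le radius_pos by (intro power_mono) auto
  moreover have "real (S - 1) * \<rho>\<^sup>2 \<le> 24 * R\<^sup>2"
  proof (cases "2 \<le> S")
    case True
    have "gap (S - 1) \<le> - \<rho>"
      using True by (intro gap_le_neg_radius) auto
    then have "\<rho>\<^sup>2 \<le> (- gap (S - 1))\<^sup>2"
      using radius_pos by (intro power_mono) auto
    then have "real (S - 1) * \<rho>\<^sup>2 \<le> real (S - 1) * (gap (S - 1))\<^sup>2"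
      by (simp add: mult_left_mono)
    also have "\<dots> \<le> 24 * R\<^sup>2"
      using True by (intro weighted_gap_bound) auto
    finally show ?thesis .
  qed simp
  moreover have "real S * \<rho>\<^sup>2 \<le> real (S - 1) * \<rho>\<^sup>2 + \<rho>\<^sup>2"
    by (cases S) (simp_all add: algebra_simps)
  ultimately show ?thesis
    using zero_le_power2[of R] by linarith
qed

end

theorem proposition1:
  fixes c y_star :: "'a::euclidean_space" and R \<rho> :: real and Y :: "'a set"
    and f :: "nat \<Rightarrow> 'a \<Rightarrow> real" and y :: "nat \<Rightarrow> 'a" and S :: nat
  assumes "R > 0" and "\<rho> > 0"
    and "convex Y" and "Y \<subseteq> cball c R" and "cball y_star \<rho> \<subseteq> Y"
    and affine: "\<forall>s\<in>{1..S}. \<exists>g b. norm g = 1 \<and> (\<forall>z. f s z = inner g z + b)"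
    and sep: "\<forall>s\<in>{1..S}. f s (y s) \<ge> 0 \<and> (\<forall>z\<in>Y. f s z \<le> 0)"
    and first: "y 1 = c"
    and step: "\<forall>s\<in>{2..S}. y s \<in> BL_level_set f (s - 1) c R \<and>
                 (\<forall>z\<in>BL_level_set f (s - 1) c R. dist (y (s - 1)) (y s) \<le> dist (y (s - 1)) z)"
  shows "(\<forall>s\<in>{1..S}. BL_gap f s c R \<le> - \<rho>) \<and> real S \<le> 32 * R\<^sup>2 / \<rho>\<^sup>2"
proof -
  interpret bundle_level_run c y_star R \<rho> f y S
  proof
    show "cball y_star \<rho> \<subseteq> cball c R"
      using assms(4,5) by blast
    show "unit_affine (f s)" if "s \<in> {1..S}" for s
      using affine that unfolding unit_affine_def by blast
    show "0 \<le> f s (y s)" if "s \<in> {1..S}" for s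
      using sep that by blast
    show "f s z \<le> 0" if "s \<in> {1..S}" "z \<in> cball y_star \<rho>" for s z
      using sep assms(5) that by blast
    show "y (Suc s) \<in> BL_level_set f s c R" if "s \<in> {1..<S}" for s
      using step[rule_format, of "Suc s"] that by simp
    show "dist (y s) (y (Suc s)) \<le> dist (y s) z"
      if "s \<in> {1..<S}" "z \<in> BL_level_set f s c R" for s z
      using step[rule_format, of "Suc s"] that by simp
  qed (fact \<open>\<rho> > 0\<close> first)+
  show ?thesis
    using gap_le_neg_radius iteration_bound \<open>\<rho> > 0\<close> by (simp add: pos_le_divide_eq)
qed

end
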